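(* Let $N\in\mathbb Z$, $\gamma\in\mathbb Q$. For every $k\in\mathbb Q$ and every integer $i\le N$, $$\varphi_{N,\gamma}\Big(\mathrm{Res}_x\big((1+x)^kx^i\textstyle\sum_{j\le N}z^jx^{-j-1}\big)\Big)=(-1)^{i+1}\mathrm{Res}_x\big((1+x)^{\gamma-k-i}x^i\textstyle\sum_{j\le N}z^jx^{-j-1}\big).$$ In particular $\varphi_{N,\gamma}^2=\mathrm{id}$, and $\varphi_{N,\gamma}(O(N,Q,q;z))=O(N,\gamma-Q-q,q;z)$ for all $Q\in\mathbb Q$, $q\in\mathbb Z$.
   Context: $\mathrm{Res}_x$ denotes the coefficient of $x^{-1}$ and $(1+x)^c$ ($c\in\mathbb Q$) denotes the binomial series $\sum_{k\ge0}\binom ckx^k$; thus $\mathrm{Res}_x\big((1+x)^kx^i\sum_{j\le N}z^jx^{-j-1}\big)=\sum_{l=0}^{N-i}\binom kl z^{i+l}$. The linear map $\varphi_{N,\gamma}:\mathbb C[z,z^{-1}]\to\mathbb C[z,z^{-1}]$ is defined on monomials by $\varphi_{N,\gamma}(z^i)=(-1)^{i+1}\mathrm{Res}_x\big((1+x)^{\gamma-i}x^i\sum_{j\le N}z^jx^{-j-1}\big)$ for $i\le N$ and $\varphi_{N,\gamma}(z^i)=z^i$ for $i\ge N+1$. For $N,q\in\mathbb Z$ and $Q\in\mathbb Q$, $O(N,Q,q;z)$ is the subspace of $\mathbb C[z,z^{-1}]$ spanned by $z^i$ ($i\ge N+1$) together with $\sum_{i=0}^{N-q-j}\binom Qi z^{i+q+j}$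 for $j=0,-1,-2,\dots$. *)

theory Defs
  imports Complex_Main
begin

text \<open>Laurent polynomials in C[z,z^-1] are represented by their coefficient
functions int => complex with finite support: f n is the coefficient of z^n.\<close>

definition laurent :: "(int \<Rightarrow> complex) \<Rightarrow> bool" where
  "laurent f \<longleftrightarrow> finite {n. f n \<noteq> 0}"

definition mono :: "int \<Rightarrow> int \<Rightarrow> complex" where
  "mono i = (\<lambda>n. if n = i then 1 else 0)"

text \<open>resx N k i = Res_x((1+x)^k x^i sum_{j<=N} z^j x^{-j-1})
  = sum_{l=0}^{N-i} binom(k,l) z^(i+l).\<close>
definition resx :: "int \<Rightarrow> rat \<Rightarrow> int \<Rightarrow> int \<Rightarrow> complex" where
  "resx N k i = (\<lambda>n. if i \<le> n \<and> n \<le> N then (of_rat k :: complex) gchoose nat (n - i) else 0)"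

definition phi_mono :: "int \<Rightarrow> rat \<Rightarrow> int \<Rightarrow> int \<Rightarrow> complex" where
  "phi_mono N \<gamma> i =
     (if i \<le> N then (\<lambda>n. (-1::complex) powi (i + 1) * resx N (\<gamma> - of_int i) i n)
      else mono i)"

definition phi :: "int \<Rightarrow> rat \<Rightarrow> (int \<Rightarrow> complex) \<Rightarrow> int \<Rightarrow> complex" where
  "phi N \<gamma> f = (\<lambda>n. \<Sum>i\<in>{i. f i \<noteq> 0}. f i * phi_mono N \<gamma> i n)"

definition lspan :: "(int \<Rightarrow> complex) set \<Rightarrow> (int \<Rightarrow> complex) set" where
  "lspan S = {f. \<exists>t r. finite t \<and> t \<subseteq> S \<and> f = (\<lambda>n. \<Sum>a\<in>t. r a * a n)}"

definition Osp :: "int \<Rightarrow> rat \<Rightarrow> int \<Rightarrow> (int \<Rightarrow> complex) set" where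
  "Osp N Q q = lspan ({mono i | i. i \<ge> N + 1} \<union>
     {(\<lambda>n. \<Sum>i\<in>{0..N - q - j}. ((of_rat Q :: complex) gchoose nat i) * mono (i + q + j) n)
       | j. j \<le> 0})"

end

theory Submission
  imports Defs "HOL-Computational_Algebra.Formal_Power_Series"
begin

(*
  Notation: s_{k,i} denotes Res_x((1+x)^k x^i sum_{j<=N} z^j x^{-j-1}), i.e. resx N k i,
  whose coefficient of z^n is (k choose n-i) for i <= n <= N.

  1. Two consequences of Vandermonde's identity for generalized binomial coefficients:
     an alternating convolution and the splitting of (P+d choose s) for a natural d.
  2. phi is linear on finitely supported coefficient functions; its value may be computed
     over any finite superset of the support.
  3. Residue formula: expanding s_{k,i} in monomials, applying phi termwise and collapsing
     the double sum with the alternating convolution gives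
     phi(s_{k,i}) = (-1)^(i+1) s_{gamma-k-i,i}.
  4. Involution: taking k = gamma - i in (3) shows phi(phi(z^i)) = s_{0,i} = z^i for i <= N,
     while z^i is fixed for i > N; linearity gives phi o phi = id on Laurent polynomials.
  5. O(N,Q,q) is the span of the z^i (i > N) and s_{Q,q+j} (j <= 0). By (3) and the
     splitting identity, phi maps each generator into O(N,gamma-Q-q,q); since the parameter
     map Q |-> gamma-Q-q is an involution and phi is one too, the images are equal.
*)

subsection \<open>Binomial identities\<close>

text \<open>Alternating Chu--Vandermonde convolution:
  sum_l (-1)^l (k choose l) (a-l choose s-l) = (a-k choose s).
  It collapses the double sum arising from applying phi to s_{k,i}.\<close>
lemma gbinomial_alternating_convolution:
  fixes a k :: "'a :: field_char_0"
  shows "(\<Sum>l\<in>{0..s}. (-1)^l * (k gchoose l) * ((a - of_nat l) gchoose (s - l)))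
         = (a - k) gchoose s"
proof -
  have "(\<Sum>l\<in>{0..s}. (-1)^l * (k gchoose l) * ((a - of_nat l) gchoose (s - l)))
      = (\<Sum>l\<in>{0..s}. (-1)^s * ((k gchoose l) * ((of_nat s - a - 1) gchoose (s - l))))"
  proof (rule sum.cong[OF refl])
    fix l assume l: "l \<in> {0..s}"
    have upper: "of_nat (s - l) - (a - of_nat l) - 1 = (of_nat s - a - 1 :: 'a)"
      using l by (simp add: of_nat_diff)
    have sign: "(-1::'a)^l * (-1)^(s-l) = (-1)^s"
      using l by (simp add: power_add[symmetric])
    show "(-1)^l * (k gchoose l) * ((a - of_nat l) gchoose (s - l))
        = (-1)^s * ((k gchoose l) * ((of_nat s - a - 1) gchoose (s - l)))"
      using sign upper
      by (subst gbinomial_negated_upper[of "a - of_nat l"]) (simp add: algebra_simps)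
  qed
  also have "\<dots> = (-1)^s * ((k + (of_nat s - a - 1)) gchoose s)"
    by (simp add: sum_distrib_left[symmetric] gbinomial_Vandermonde)
  also have "\<dots> = (a - k) gchoose s"
    by (subst gbinomial_negated_upper[of "a - k"]) (simp add: algebra_simps)
  finally show ?thesis .
qed

text \<open>Splitting off a natural shift: (P+d choose s) = sum_{m<=d} (d choose m)(P choose s-m),
  with terms m > s vanishing. It expresses s_{P+d,i} through s_{P,i+m}.\<close>
lemma gbinomial_add_nat:
  fixes P :: "'a :: field_char_0"
  shows "(\<Sum>m\<in>{0..d}. (of_nat d gchoose m) * (if m \<le> s then P gchoose (s - m) else 0))
         = (P + of_nat d) gchoose s"
proof -
  have "(\<Sum>m\<in>{0..d}. (of_nat d gchoose m) * (if m \<le> s then P gchoose (s - m) else 0))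
     = (\<Sum>m\<in>{0..d+s}. (of_nat d gchoose m) * (if m \<le> s then P gchoose (s - m) else 0))"
    by (rule sum.mono_neutral_left) (auto simp: binomial_gbinomial[symmetric] binomial_eq_0)
  also have "\<dots> = (\<Sum>m\<in>{0..s}. (of_nat d gchoose m) * (P gchoose (s - m)))"
    by (rule sum.mono_neutral_cong_right) auto
  also have "\<dots> = (of_nat d + P) gchoose s" by (rule gbinomial_Vandermonde)
  finally show ?thesis by (simp add: add.commute)
qed

lemma supp_resx: "{n. resx N k i n \<noteq> 0} \<subseteq> {i..N}"
  by (auto simp: resx_def split: if_splits)

lemma laurent_resx: "laurent (resx N k i)"
  unfolding laurent_def by (rule finite_subset[OF supp_resx]) simp

lemma laurent_mono: "laurent (mono i)"
  unfolding laurent_def mono_def by (rule finite_subset[of _ "{i}"]) auto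

lemma laurent_phi_mono: "laurent (phi_mono N \<gamma> i)"
proof (cases "i \<le> N")
  case True
  have "{n. phi_mono N \<gamma> i n \<noteq> 0} \<subseteq> {n. resx N (\<gamma> - of_int i) i n \<noteq> 0}"
    using True by (auto simp: phi_mono_def)
  then show ?thesis
    using laurent_resx unfolding laurent_def by (rule finite_subset)
next
  case False then show ?thesis by (simp add: phi_mono_def laurent_mono)
qed

lemma phi_over_superset:
  assumes "finite A" "{i. f i \<noteq> 0} \<subseteq> A"
  shows "phi N \<gamma> f = (\<lambda>n. \<Sum>i\<in>A. f i * phi_mono N \<gamma> i n)"
  unfolding phi_def
  by (rule ext, rule sum.mono_neutral_left) (use assms in auto)

lemma phi_linear_comb:
  assumes J: "finite J" and L: "\<And>j. j \<in> J \<Longrightarrow> laurent (g j)"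
  shows "phi N \<gamma> (\<lambda>n. \<Sum>j\<in>J. c j * g j n) = (\<lambda>n. \<Sum>j\<in>J. c j * phi N \<gamma> (g j) n)"
proof -
  define A where "A = (\<Union>j\<in>J. {i. g j i \<noteq> 0})"
  have fin: "finite A" unfolding A_def using J L by (auto simp: laurent_def)
  have supp: "{i. (\<Sum>j\<in>J. c j * g j i) \<noteq> 0} \<subseteq> A"
  proof
    fix i assume "i \<in> {i. (\<Sum>j\<in>J. c j * g j i) \<noteq> 0}"
    then obtain j where "j \<in> J" "c j * g j i \<noteq> 0"
      by (metis (mono_tags, lifting) mem_Collect_eq sum.neutral)
    then show "i \<in> A" unfolding A_def by auto
  qed
  have gj: "\<And>j. j \<in> J \<Longrightarrow> phi N \<gamma> (g j) = (\<lambda>n. \<Sum>i\<in>A. g j i * phi_mono N \<gamma> i n)"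
    by (rule phi_over_superset[OF fin]) (auto simp: A_def)
  show ?thesis
    unfolding phi_over_superset[OF fin supp]
    by (rule ext) (simp add: gj sum_distrib_right sum_distrib_left mult.assoc sum.swap[of _ A])
qed

lemma phi_scale:
  assumes "laurent g"
  shows "phi N \<gamma> (\<lambda>n. c * g n) = (\<lambda>n. c * phi N \<gamma> g n)"
  using phi_linear_comb[of "{0::nat}" "\<lambda>_. g" N \<gamma> "\<lambda>_. c"] assms by simp

lemma phi_zero: "phi N \<gamma> (\<lambda>n. 0) = (\<lambda>n. 0)"
  by (simp add: phi_def)

subsection \<open>The residue formula\<close>

lemma phi_resx_coeff:
  assumes "i \<le> n" "n \<le> N"
  defines "s \<equiv> nat (n - i)"
  shows "phi N \<gamma> (resx N k i) n = (-1::complex) powi (i + 1) *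
           (\<Sum>l\<in>{0..s}. (-1)^l * (of_rat k gchoose l)
                          * ((of_rat \<gamma> - of_int i - of_nat l) gchoose (s - l)))"
proof -
  have n: "n = i + int s" using assms by (simp add: s_def)
  let ?term = "\<lambda>m. resx N k i m * ((-1::complex) powi (m + 1) * resx N (\<gamma> - of_int m) m n)"
  have "phi N \<gamma> (resx N k i) n = (\<Sum>m\<in>{i..N}. resx N k i m * phi_mono N \<gamma> m n)"
    by (subst phi_over_superset[OF _ supp_resx]) auto
  also have "\<dots> = (\<Sum>m\<in>{i..N}. ?term m)"
    by (rule sum.cong) (auto simp: phi_mono_def)
  also have "\<dots> = (\<Sum>m\<in>{i..n}. ?term m)"
    \<comment> \<open>monomials z^m with m > n do not contribute to the coefficient of z^n\<close>
    by (rule sum.mono_neutral_right) (use assms in \<open>auto simp: resx_def\<close>)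
  also have "\<dots> = (\<Sum>l\<in>{0..s}. ?term (i + int l))"
  proof -
    have "{i..n} = (\<lambda>l. i + int l) ` {0..s}"
      using n by (auto simp: image_iff intro!: bexI[of _ "nat (_ - i)"])
    moreover have "inj_on (\<lambda>l. i + int l) {0..s}" by (auto simp: inj_on_def)
    ultimately show ?thesis by (simp add: sum.reindex)
  qed
  also have "\<dots> = (\<Sum>l\<in>{0..s}. (-1::complex) powi (i + 1) * ((-1)^l * (of_rat k gchoose l)
                     * ((of_rat \<gamma> - of_int i - of_nat l) gchoose (s - l))))"
  proof (rule sum.cong[OF refl])
    fix l assume l: "l \<in> {0..s}"
    have sign: "(-1::complex) powi (i + int l + 1) = (-1) powi (i + 1) * (-1)^l"
      by (simp add: power_int_add add.commute add.left_commute)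
    have "nat (n - (i + int l)) = s - l" "i + int l \<le> n" "i + int l \<le> N" "n \<le> N"
      using l n assms(2) by auto
    then show "?term (i + int l) = (-1::complex) powi (i + 1) * ((-1)^l * (of_rat k gchoose l)
                 * ((of_rat \<gamma> - of_int i - of_nat l) gchoose (s - l)))"
      using l unfolding resx_def sign
      by (simp add: of_rat_diff of_rat_add algebra_simps)
  qed
  finally show ?thesis by (simp add: sum_distrib_left)
qed

lemma phi_resx:
  assumes "i \<le> N"
  shows "phi N \<gamma> (resx N k i) = (\<lambda>n. (-1::complex) powi (i + 1) * resx N (\<gamma> - k - of_int i) i n)"
proof
  fix n
  show "phi N \<gamma> (resx N k i) n = (-1::complex) powi (i + 1) * resx N (\<gamma> - k - of_int i) i n"
  proof (cases "i \<le> n \<and> n \<le> N")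
    case True
    then have "phi N \<gamma> (resx N k i) n = (-1::complex) powi (i + 1)
                 * ((of_rat \<gamma> - of_int i - of_rat k) gchoose nat (n - i))"
      by (simp add: phi_resx_coeff gbinomial_alternating_convolution)
    moreover have "resx N (\<gamma> - k - of_int i) i n
                     = (of_rat \<gamma> - of_int i - of_rat k) gchoose nat (n - i)"
      using True by (simp add: resx_def of_rat_diff of_rat_add algebra_simps)
    ultimately show ?thesis by simp
  next
    case False
    have "phi N \<gamma> (resx N k i) n = (\<Sum>m\<in>{i..N}. resx N k i m * phi_mono N \<gamma> m n)"
      by (subst phi_over_superset[OF _ supp_resx]) auto
    also have "\<dots> = 0"
      using False by (intro sum.neutral) (auto simp: phi_mono_def resx_def)
    finally have "phi N \<gamma> (resx N k i) n = 0" .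
    moreover have "resx N (\<gamma> - k - of_int i) i n = 0" using False by (auto simp: resx_def)
    ultimately show ?thesis by simp
  qed
qed

subsection \<open>phi is an involution\<close>

lemma resx_zero_exponent: "i \<le> N \<Longrightarrow> resx N 0 i = mono i"
  by (rule ext) (auto simp: resx_def mono_def gbinomial_0_left)

lemma phi_mono_above: "N < i \<Longrightarrow> phi N \<gamma> (mono i) = mono i"
  by (subst phi_over_superset[of "{i}"]) (auto simp: mono_def phi_mono_def)

text \<open>phi(phi(z^i)) = z^i: for i <= N this is the residue formula with k = gamma - i.\<close>
lemma phi_phi_mono: "phi N \<gamma> (phi_mono N \<gamma> i) = mono i"
proof (cases "i \<le> N")
  case True
  have sign: "(-1::complex) powi (i + 1) * (-1) powi (i + 1) = 1"
    by (simp add: power_int_mult_distrib[symmetric])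
  have "phi N \<gamma> (phi_mono N \<gamma> i)
      = phi N \<gamma> (\<lambda>n. (-1::complex) powi (i + 1) * resx N (\<gamma> - of_int i) i n)"
    using True by (simp add: phi_mono_def)
  also have "\<dots> = (\<lambda>n. (-1::complex) powi (i + 1) * phi N \<gamma> (resx N (\<gamma> - of_int i) i) n)"
    by (rule phi_scale[OF laurent_resx])
  also have "\<dots> = resx N 0 i"
    using True by (simp add: phi_resx mult.assoc[symmetric] sign)
  also have "\<dots> = mono i" using True by (rule resx_zero_exponent)
  finally show ?thesis .
next
  case False then show ?thesis by (simp add: phi_mono_def phi_mono_above)
qed

theorem phi_involution:
  assumes "laurent f"
  shows "phi N \<gamma> (phi N \<gamma> f) = f"
proof -
  have fin: "finite {i. f i \<noteq> 0}" using assms by (simp add: laurent_def)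
  have "phi N \<gamma> (phi N \<gamma> f) = phi N \<gamma> (\<lambda>n. \<Sum>i\<in>{i. f i \<noteq> 0}. f i * phi_mono N \<gamma> i n)"
    by (simp add: phi_def)
  also have "\<dots> = (\<lambda>n. \<Sum>i\<in>{i. f i \<noteq> 0}. f i * mono i n)"
    by (simp add: phi_linear_comb[OF fin laurent_phi_mono] phi_phi_mono)
  also have "\<dots> = f"
    using fin by (auto simp: mono_def if_distrib cong: if_cong)
  finally show ?thesis .
qed

lemma lspan_mem: "a \<in> S \<Longrightarrow> a \<in> lspan S"
  unfolding lspan_def by (rule CollectI, rule exI[of _ "{a}"], rule exI[of _ "\<lambda>_. 1"]) auto

lemma lspan_zero: "(\<lambda>n. 0) \<in> lspan S"
  unfolding lspan_def by (rule CollectI, rule exI[of _ "{}"]) auto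

text \<open>A span is closed under finite linear combinations: merge the finitely many
  generators used by the summands and add up their coefficients.\<close>
lemma lspan_comb:
  assumes J: "finite J" and G: "\<And>j. j \<in> J \<Longrightarrow> g j \<in> lspan S"
  shows "(\<lambda>n. \<Sum>j\<in>J. c j * g j n) \<in> lspan S"
proof -
  have "\<forall>j\<in>J. \<exists>t r. finite t \<and> t \<subseteq> S \<and> g j = (\<lambda>n. \<Sum>a\<in>t. r a * a n)"
    using G by (auto simp: lspan_def)
  then obtain t r where tr: "\<And>j. j \<in> J \<Longrightarrow>
      finite (t j) \<and> t j \<subseteq> S \<and> g j = (\<lambda>n. \<Sum>a\<in>t j. r j a * a n)"
    by metis
  define T where "T = (\<Union>j\<in>J. t j)"
  define coeff where "coeff a = (\<Sum>j\<in>J. c j * (if a \<in> t j then r j a else 0))" for a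
  have fin: "finite T" and sub: "T \<subseteq> S" using J tr by (auto simp: T_def)
  have gT: "g j n = (\<Sum>a\<in>T. (if a \<in> t j then r j a else 0) * a n)" if j: "j \<in> J" for j n
  proof -
    have "g j n = (\<Sum>a\<in>t j. r j a * a n)" using tr[OF j] by simp
    also have "\<dots> = (\<Sum>a\<in>T. (if a \<in> t j then r j a else 0) * a n)"
      by (rule sum.mono_neutral_cong_left) (use fin j in \<open>auto simp: T_def\<close>)
    finally show ?thesis .
  qed
  have "(\<lambda>n. \<Sum>j\<in>J. c j * g j n) = (\<lambda>n. \<Sum>a\<in>T. coeff a * a n)"
    by (rule ext) (simp add: gT coeff_def sum_distrib_left sum_distrib_right mult.assoc
                    sum.swap[of _ J] cong: sum.cong)
  then show ?thesis unfolding lspan_def using fin sub by blast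
qed

lemma lspan_laurent:
  assumes "\<And>a. a \<in> S \<Longrightarrow> laurent a" "f \<in> lspan S"
  shows "laurent f"
proof -
  obtain t r where tr: "finite t" "t \<subseteq> S" "f = (\<lambda>n. \<Sum>a\<in>t. r a * a n)"
    using assms(2) by (auto simp: lspan_def)
  have "{n. f n \<noteq> 0} \<subseteq> (\<Union>a\<in>t. {n. a n \<noteq> 0})"
  proof
    fix n assume "n \<in> {n. f n \<noteq> 0}"
    then obtain a where "a \<in> t" "r a * a n \<noteq> 0" using tr(3)
      by (metis (mono_tags, lifting) mem_Collect_eq sum.neutral)
    then show "n \<in> (\<Union>a\<in>t. {n. a n \<noteq> 0})" by auto
  qed
  moreover have "finite (\<Union>a\<in>t. {n. a n \<noteq> 0})"
    using tr assms(1) by (auto simp: laurent_def)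
  ultimately show ?thesis unfolding laurent_def by (rule finite_subset)
qed

subsection \<open>The spaces O(N,Q,q)\<close>

definition O_generators :: "int \<Rightarrow> rat \<Rightarrow> int \<Rightarrow> (int \<Rightarrow> complex) set" where
  "O_generators N Q q = {mono i | i. i \<ge> N + 1} \<union> {resx N Q (q + j) | j. j \<le> 0}"

lemma O_generator_is_resx:
  "(\<lambda>n. \<Sum>i\<in>{0..N - q - j}. ((of_rat Q :: complex) gchoose nat i) * mono (i + q + j) n)
   = resx N Q (q + j)"
proof
  fix n
  have "(\<Sum>i\<in>{0..N - q - j}. ((of_rat Q :: complex) gchoose nat i) * mono (i + q + j) n)
      = (\<Sum>i\<in>{0..N - q - j}. if i = n - q - j then (of_rat Q :: complex) gchoose nat i else 0)"
    by (rule sum.cong) (auto simp: mono_def)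
  also have "\<dots> = resx N Q (q + j) n"
    by (auto simp: resx_def diff_diff_eq)
  finally show "(\<Sum>i\<in>{0..N - q - j}. ((of_rat Q :: complex) gchoose nat i) * mono (i + q + j) n)
      = resx N Q (q + j) n" .
qed

lemma Osp_eq_lspan_O_generators: "Osp N Q q = lspan (O_generators N Q q)"
  unfolding Osp_def O_generators_def O_generator_is_resx ..

lemma laurent_O_generator: "a \<in> O_generators N Q q \<Longrightarrow> laurent a"
  by (auto simp: O_generators_def laurent_mono laurent_resx)

lemma laurent_Osp: "f \<in> Osp N Q q \<Longrightarrow> laurent f"
  unfolding Osp_eq_lspan_O_generators by (rule lspan_laurent[OF laurent_O_generator])

lemma resx_add_nat:
  "resx N (P + of_nat d) i
   = (\<lambda>n. \<Sum>m\<in>{0..d}. ((of_nat d :: complex) gchoose m) * resx N P (i + int m) n)"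
proof
  fix n
  show "resx N (P + of_nat d) i n
        = (\<Sum>m\<in>{0..d}. ((of_nat d :: complex) gchoose m) * resx N P (i + int m) n)"
  proof (cases "i \<le> n \<and> n \<le> N")
    case True
    define s where "s = nat (n - i)"
    have "(\<Sum>m\<in>{0..d}. ((of_nat d :: complex) gchoose m) * resx N P (i + int m) n)
       = (\<Sum>m\<in>{0..d}. ((of_nat d :: complex) gchoose m)
                        * (if m \<le> s then of_rat P gchoose (s - m) else 0))"
    proof (rule sum.cong[OF refl])
      fix m
      have "(i + int m \<le> n) = (m \<le> s)" "m \<le> s \<Longrightarrow> nat (n - (i + int m)) = s - m"
        using True s_def by auto
      then show "((of_nat d :: complex) gchoose m) * resx N P (i + int m) n
          = ((of_nat d :: complex) gchoose m) * (if m \<le> s then of_rat P gchoose (s - m) else 0)"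
        using True by (auto simp: resx_def)
    qed
    also have "\<dots> = (of_rat P + of_nat d) gchoose s" by (rule gbinomial_add_nat)
    finally show ?thesis using True by (simp add: resx_def s_def of_rat_add)
  next
    case False
    then show ?thesis by (auto simp: resx_def intro!: sum.neutral)
  qed
qed

text \<open>For s_{Q,q+j} with
  q+j <= N the residue formula gives +-s_{P+d,q+j} with P = gamma-Q-q and d = -j, which
  splits into the generators s_{P,q+j+m}, m <= d.\<close>
lemma phi_O_generator:
  assumes a: "a \<in> O_generators N Q q"
  shows "phi N \<gamma> a \<in> Osp N (\<gamma> - Q - of_int q) q"
proof -
  let ?P = "\<gamma> - Q - of_int q"
  consider (above) i where "a = mono i" "i \<ge> N + 1"
    | (vanishing) j where "a = resx N Q (q + j)" "N < q + j"
    | (resx) j where "a = resx N Q (q + j)" "j \<le> 0" "q + j \<le> N"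
    using a unfolding O_generators_def by force
  then show ?thesis
  proof cases
    case above
    then show ?thesis
      by (auto simp: phi_mono_above Osp_eq_lspan_O_generators O_generators_def intro!: lspan_mem)
  next
    case vanishing
    then have "a = (\<lambda>n. 0)" by (auto simp: resx_def)
    then show ?thesis by (simp add: phi_zero Osp_eq_lspan_O_generators lspan_zero)
  next
    case resx
    define d where "d = nat (- j)"
    define c where "c = (-1::complex) powi (q + j + 1)"
    have exponent: "\<gamma> - Q - of_int (q + j) = ?P + of_nat d" using resx by (simp add: d_def)
    have "phi N \<gamma> a = (\<lambda>n. c * resx N (\<gamma> - Q - of_int (q + j)) (q + j) n)"
      using resx by (simp add: phi_resx c_def)
    also have "\<dots> = (\<lambda>n. c * resx N (?P + of_nat d) (q + j) n)"
      unfolding exponent ..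
    also have "\<dots> = (\<lambda>n. \<Sum>m\<in>{0..d}. (c * (of_nat d gchoose m)) * resx N ?P (q + (j + int m)) n)"
      by (simp add: resx_add_nat sum_distrib_left mult.assoc add.assoc)
    also have "\<dots> \<in> lspan (O_generators N ?P q)"
    proof (rule lspan_comb)
      fix m assume "m \<in> {0..d}"
      then have "j + int m \<le> 0" using resx by (simp add: d_def)
      then show "resx N ?P (q + (j + int m)) \<in> lspan (O_generators N ?P q)"
        unfolding O_generators_def by (intro lspan_mem) blast
    qed simp
    finally show ?thesis by (simp add: Osp_eq_lspan_O_generators)
  qed
qed

lemma phi_Osp_subset: "phi N \<gamma> ` Osp N Q q \<subseteq> Osp N (\<gamma> - Q - of_int q) q"
proof
  fix y assume "y \<in> phi N \<gamma> ` Osp N Q q"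
  then obtain t r where tr: "finite t" "t \<subseteq> O_generators N Q q"
    and y: "y = phi N \<gamma> (\<lambda>n. \<Sum>a\<in>t. r a * a n)"
    by (auto simp: Osp_eq_lspan_O_generators lspan_def)
  have "y = (\<lambda>n. \<Sum>a\<in>t. r a * phi N \<gamma> a n)"
    unfolding y by (rule phi_linear_comb[OF tr(1)]) (use tr(2) in \<open>auto intro: laurent_O_generator\<close>)
  also have "\<dots> \<in> Osp N (\<gamma> - Q - of_int q) q"
    unfolding Osp_eq_lspan_O_generators
    by (rule lspan_comb[OF tr(1)])
       (use tr(2) in \<open>auto intro: phi_O_generator[unfolded Osp_eq_lspan_O_generators]\<close>)
  finally show "y \<in> Osp N (\<gamma> - Q - of_int q) q" .
qed

text \<open>Equality of images: apply the inclusion to the parameter gamma-Q-q, which is mapped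
  back to Q, and use that phi is an involution on Laurent polynomials.\<close>
lemma phi_image_Osp: "phi N \<gamma> ` Osp N Q q = Osp N (\<gamma> - Q - of_int q) q"
proof
  show "Osp N (\<gamma> - Q - of_int q) q \<subseteq> phi N \<gamma> ` Osp N Q q"
  proof
    fix y assume y: "y \<in> Osp N (\<gamma> - Q - of_int q) q"
    have "phi N \<gamma> y \<in> Osp N Q q"
      using phi_Osp_subset[of N \<gamma> "\<gamma> - Q - of_int q" q] y by auto
    moreover have "y = phi N \<gamma> (phi N \<gamma> y)"
      using phi_involution[OF laurent_Osp[OF y]] by simp
    ultimately show "y \<in> phi N \<gamma> ` Osp N Q q" by blast
  qed
qed (rule phi_Osp_subset)

theorem mainTheorem6:
  fixes N :: int and \<gamma> :: rat
  shows "(\<forall>(k::rat) (i::int). i \<le> N \<longrightarrow>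
            phi N \<gamma> (resx N k i) =
            (\<lambda>n. (-1::complex) powi (i + 1) * resx N (\<gamma> - k - of_int i) i n))
       \<and> (\<forall>f. laurent f \<longrightarrow> phi N \<gamma> (phi N \<gamma> f) = f)
       \<and> (\<forall>(Q::rat) (q::int). phi N \<gamma> ` Osp N Q q = Osp N (\<gamma> - Q - of_int q) q)"
  using phi_resx phi_involution phi_image_Osp by blast

end
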